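(* Let $G$ be a polarized and anchored progressive graph. Then there exists at most one planar order $\prec$ on $E(G)$ such that: (1) $e_1\to e_2$ implies $e_1\prec e_2$; (2) for every vertex $v$ and $e_1,e_2\in I(v)$, $e_1<e_2$ in $I(v)$ iff $e_1\prec e_2$, and for $e_1,e_2\in O(v)$, $e_1<e_2$ in $O(v)$ iff $e_1\prec e_2$; (3) for $i_1,i_2\in I(G)$, $i_1<i_2$ in $I(G)$ iff $i_1\prec i_2$, and for $o_1,o_2\in O(G)$, $o_1<o_2$ in $O(G)$ iff $o_1\prec o_2$.
   Context: A progressive graph is a finite directed acyclic graph (parallel edges allowed) in which every source and every sink has degree one; degree-one vertices are boundary vertices. $I(G)$ (input edges) is the set of edges whose initial vertex is a boundary vertex, $O(G)$ (output edges) those whose terminal vertex is a boundary vertex. For a vertex $v$, $I(v)$ and $O(v)$ are its sets of incoming and outgoing edges. For edges write $e\to e'$ if $e\neq e'$ and there is a directed path whose first edge is $e$ and last edge is $e'$. A planar order on $G$ is a linear order $\prec$ on $E(G)$ such that (P1) $e_1\to e_2$ implies $e_1\prec e_2$; (P2) if $e_1\prec e_2\prec e_3$ and $e_1\to e_3$ then $e_1\to e_2$ or $e_2\to e_3$. $G$ is polarized if for every vertex $v$, linear orders $<$ on $I(v)$ and on $O(v)$ are given; $G$ is anchored if linear orders $<$ on $I(G)$ and on $O(G)$ are given. *)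

theory Defs
  imports Main
begin

definition in_edges :: "'e set \<Rightarrow> ('e \<Rightarrow> 'v) \<Rightarrow> 'v \<Rightarrow> 'e set" where
  "in_edges E tgt v = {e \<in> E. tgt e = v}"

definition out_edges :: "'e set \<Rightarrow> ('e \<Rightarrow> 'v) \<Rightarrow> 'v \<Rightarrow> 'e set" where
  "out_edges E src v = {e \<in> E. src e = v}"

definition vdegree :: "'e set \<Rightarrow> ('e \<Rightarrow> 'v) \<Rightarrow> ('e \<Rightarrow> 'v) \<Rightarrow> 'v \<Rightarrow> nat" where
  "vdegree E src tgt v = card (in_edges E tgt v) + card (out_edges E src v)"

definition progressive_graph ::
  "'v set \<Rightarrow> 'e set \<Rightarrow> ('e \<Rightarrow> 'v) \<Rightarrow> ('e \<Rightarrow> 'v) \<Rightarrow> bool" where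
  "progressive_graph V E src tgt \<longleftrightarrow>
     finite V \<and> finite E \<and>
     (\<forall>e\<in>E. src e \<in> V \<and> tgt e \<in> V) \<and>
     (\<forall>v. (v, v) \<notin> trancl {(src e, tgt e) | e. e \<in> E}) \<and>
     (\<forall>v\<in>V. in_edges E tgt v = {} \<longrightarrow> vdegree E src tgt v = 1) \<and>
     (\<forall>v\<in>V. out_edges E src v = {} \<longrightarrow> vdegree E src tgt v = 1)"

definition boundary :: "'v set \<Rightarrow> 'e set \<Rightarrow> ('e \<Rightarrow> 'v) \<Rightarrow> ('e \<Rightarrow> 'v) \<Rightarrow> 'v set" where
  "boundary V E src tgt = {v \<in> V. vdegree E src tgt v = 1}"

definition input_edges :: "'v set \<Rightarrow> 'e set \<Rightarrow> ('e \<Rightarrow> 'v) \<Rightarrow> ('e \<Rightarrow> 'v) \<Rightarrow> 'e set" where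
  "input_edges V E src tgt = {e \<in> E. src e \<in> boundary V E src tgt}"

definition output_edges :: "'v set \<Rightarrow> 'e set \<Rightarrow> ('e \<Rightarrow> 'v) \<Rightarrow> ('e \<Rightarrow> 'v) \<Rightarrow> 'e set" where
  "output_edges V E src tgt = {e \<in> E. tgt e \<in> boundary V E src tgt}"

definition edge_path :: "'e set \<Rightarrow> ('e \<Rightarrow> 'v) \<Rightarrow> ('e \<Rightarrow> 'v) \<Rightarrow> 'e \<Rightarrow> 'e \<Rightarrow> bool" where
  "edge_path E src tgt e e' \<longleftrightarrow>
     e \<noteq> e' \<and> (e, e') \<in> trancl {(a, b). a \<in> E \<and> b \<in> E \<and> tgt a = src b}"

definition slin_on :: "'a set \<Rightarrow> 'a rel \<Rightarrow> bool" where
  "slin_on A r \<longleftrightarrow> r \<subseteq> A \<times> A \<and> strict_linear_order_on A r"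

definition planar_order ::
  "'v set \<Rightarrow> 'e set \<Rightarrow> ('e \<Rightarrow> 'v) \<Rightarrow> ('e \<Rightarrow> 'v) \<Rightarrow> 'e rel \<Rightarrow> bool" where
  "planar_order V E src tgt P \<longleftrightarrow>
     slin_on E P \<and>
     (\<forall>e1 e2. edge_path E src tgt e1 e2 \<longrightarrow> (e1, e2) \<in> P) \<and>
     (\<forall>e1 e2 e3. (e1, e2) \<in> P \<and> (e2, e3) \<in> P \<and> edge_path E src tgt e1 e3 \<longrightarrow>
        edge_path E src tgt e1 e2 \<or> edge_path E src tgt e2 e3)"

definition polarized ::
  "'v set \<Rightarrow> 'e set \<Rightarrow> ('e \<Rightarrow> 'v) \<Rightarrow> ('e \<Rightarrow> 'v) \<Rightarrow> ('v \<Rightarrow> 'e rel) \<Rightarrow> ('v \<Rightarrow> 'e rel) \<Rightarrow> bool" where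
  "polarized V E src tgt inord outord \<longleftrightarrow>
     (\<forall>v\<in>V. slin_on (in_edges E tgt v) (inord v) \<and> slin_on (out_edges E src v) (outord v))"

definition anchored ::
  "'v set \<Rightarrow> 'e set \<Rightarrow> ('e \<Rightarrow> 'v) \<Rightarrow> ('e \<Rightarrow> 'v) \<Rightarrow> 'e rel \<Rightarrow> 'e rel \<Rightarrow> bool" where
  "anchored V E src tgt ginord goutord \<longleftrightarrow>
     slin_on (input_edges V E src tgt) ginord \<and> slin_on (output_edges V E src tgt) goutord"

definition compatible_order ::
  "'v set \<Rightarrow> 'e set \<Rightarrow> ('e \<Rightarrow> 'v) \<Rightarrow> ('e \<Rightarrow> 'v) \<Rightarrow> ('v \<Rightarrow> 'e rel) \<Rightarrow> ('v \<Rightarrow> 'e rel)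
    \<Rightarrow> 'e rel \<Rightarrow> 'e rel \<Rightarrow> 'e rel \<Rightarrow> bool" where
  "compatible_order V E src tgt inord outord ginord goutord P \<longleftrightarrow>
     planar_order V E src tgt P \<and>
     (\<forall>e1 e2. edge_path E src tgt e1 e2 \<longrightarrow> (e1, e2) \<in> P) \<and>
     (\<forall>v\<in>V. \<forall>e1\<in>in_edges E tgt v. \<forall>e2\<in>in_edges E tgt v.
        (e1, e2) \<in> inord v \<longleftrightarrow> (e1, e2) \<in> P) \<and>
     (\<forall>v\<in>V. \<forall>e1\<in>out_edges E src v. \<forall>e2\<in>out_edges E src v.
        (e1, e2) \<in> outord v \<longleftrightarrow> (e1, e2) \<in> P) \<and>
     (\<forall>i1\<in>input_edges V E src tgt. \<forall>i2\<in>input_edges V E src tgt.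
        (i1, i2) \<in> ginord \<longleftrightarrow> (i1, i2) \<in> P) \<and>
     (\<forall>o1\<in>output_edges V E src tgt. \<forall>o2\<in>output_edges V E src tgt.
        (o1, o2) \<in> goutord \<longleftrightarrow> (o1, o2) \<in> P)"

end

theory Submission
  imports Defs
begin

text \<open>Suppose two orders \<open>\<prec>\<^sub>1 \<noteq> \<prec>\<^sub>2\<close> satisfy the conditions. Enumerating \<open>E(G)\<close> along
  each of them, take the first position where the enumerations differ: it holds \<open>m\<close> for
  \<open>\<prec>\<^sub>1\<close> and \<open>m'\<close> for \<open>\<prec>\<^sub>2\<close>, so \<open>m \<prec>\<^sub>1 m'\<close>, \<open>m' \<prec>\<^sub>2 m\<close>, and both are preceded by the same
  edges. If \<open>d\<close> enters the initial vertex of \<open>m\<close>, then \<open>d \<rightarrow> m\<close>, so \<open>d \<prec>\<^sub>2 m' \<prec>\<^sub>2 m\<close>, and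
  (P2) forces \<open>d \<rightarrow> m'\<close> (\<open>m' \<rightarrow> m\<close> is excluded by \<open>m \<prec>\<^sub>1 m'\<close>); symmetrically every edge
  entering the initial vertex of \<open>m'\<close> reaches \<open>m\<close>. Hence either \<open>m, m'\<close> leave the same
  vertex, contradicting the polarization; or both are input edges, contradicting the
  anchoring; or their initial vertices reach each other, contradicting acyclicity.\<close>

lemma slin_on_subset: "slin_on A P \<Longrightarrow> P \<subseteq> A \<times> A"
  by (simp add: slin_on_def)

lemma slin_on_asym: "slin_on A P \<Longrightarrow> (x, y) \<in> P \<Longrightarrow> (y, x) \<notin> P"
  unfolding slin_on_def strict_linear_order_on_def irrefl_def by (meson transD)

lemma slin_on_irrefl: "slin_on A P \<Longrightarrow> (x, x) \<notin> P"
  using slin_on_asym by fast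

lemma slin_on_trans: "slin_on A P \<Longrightarrow> (x, y) \<in> P \<Longrightarrow> (y, z) \<in> P \<Longrightarrow> (x, z) \<in> P"
  unfolding slin_on_def strict_linear_order_on_def by (meson transD)

lemma slin_on_total:
  "slin_on A P \<Longrightarrow> x \<in> A \<Longrightarrow> y \<in> A \<Longrightarrow> x \<noteq> y \<Longrightarrow> (x, y) \<in> P \<or> (y, x) \<in> P"
  unfolding slin_on_def strict_linear_order_on_def total_on_def by blast

lemma slin_on_wf:
  assumes "finite A" "slin_on A P"
  shows "wf P"
proof (rule finite_acyclic_wf)
  show "finite P"
    using assms finite_subset[OF slin_on_subset] by blast
  have "trans P"
    using assms(2) by (simp add: slin_on_def strict_linear_order_on_def)
  then show "acyclic P"
    using slin_on_irrefl[OF assms(2)] by (simp add: acyclic_def trancl_id)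
qed

lemma slin_on_eqI:
  assumes "slin_on A P" "slin_on A Q" "\<And>x. x \<in> A \<Longrightarrow> {y. (y, x) \<in> P} = {y. (y, x) \<in> Q}"
  shows "P = Q"
  using assms slin_on_subset by fast

lemma slin_on_first_difference:
  assumes "finite A" and P: "slin_on A P" and Q: "slin_on A Q" and "P \<noteq> Q"
  obtains m m' where "m \<in> A" "m' \<in> A" "(m, m') \<in> P" "(m', m) \<in> Q"
    "{y. (y, m) \<in> P} = {y. (y, m') \<in> Q}"
proof -
  define B where "B = {x \<in> A. {y. (y, x) \<in> P} \<noteq> {y. (y, x) \<in> Q}}"
  have "B \<noteq> {}"
    using slin_on_eqI[OF P Q] \<open>P \<noteq> Q\<close> unfolding B_def by blast
  then obtain m where mB: "m \<in> B" and below_m: "\<And>y. (y, m) \<in> P \<Longrightarrow> y \<notin> B"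
    using wfE_min[OF slin_on_wf[OF \<open>finite A\<close> P]] by (metis ex_in_conv)
  have m: "m \<in> A" using mB by (simp add: B_def)
  define S where "S = {y. (y, m) \<in> P}"
  have S_A: "S \<subseteq> A" using slin_on_subset[OF P] by (auto simp: S_def)
  have "m \<in> A - S" using m slin_on_irrefl[OF P] by (simp add: S_def)
  then obtain m' where m': "m' \<in> A - S" and below_m': "\<And>y. (y, m') \<in> Q \<Longrightarrow> y \<notin> A - S"
    using wfE_min[OF slin_on_wf[OF \<open>finite A\<close> Q]] by (metis ex_in_conv)
  have "{y. (y, m') \<in> Q} \<subseteq> S"
    using below_m' slin_on_subset[OF Q] by blast
  moreover have "S \<subseteq> {y. (y, m') \<in> Q}"
  proof
    fix s assume "s \<in> S"
    hence s: "s \<in> A" "(s, m) \<in> P" using S_A by (auto simp: S_def)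
    have same_below_s: "{y. (y, s) \<in> P} = {y. (y, s) \<in> Q}"
      using below_m[OF s(2)] s(1) by (simp add: B_def)
    have "(m', s) \<notin> Q"
    proof
      assume "(m', s) \<in> Q"
      hence "(m', m) \<in> P" using same_below_s s(2) slin_on_trans[OF P] by blast
      thus False using m' by (simp add: S_def)
    qed
    moreover have "s \<noteq> m'" using \<open>s \<in> S\<close> m' by blast
    ultimately show "s \<in> {y. (y, m') \<in> Q}"
      using slin_on_total[OF Q s(1)] m' by auto
  qed
  ultimately have same_below: "{y. (y, m) \<in> P} = {y. (y, m') \<in> Q}"
    by (simp add: S_def)
  have "m \<noteq> m'" using mB same_below by (auto simp: B_def)
  moreover have "(m', m) \<notin> P" and "(m, m') \<notin> Q"
    using m' same_below slin_on_irrefl[OF P] by (auto simp: S_def)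
  ultimately show thesis
    using that m m' slin_on_total[OF P, of m m'] slin_on_total[OF Q, of m m'] same_below
    by blast
qed

lemma edge_path_if_consecutive:
  assumes "progressive_graph V E src tgt" "d \<in> E" "x \<in> E" "tgt d = src x"
  shows "edge_path E src tgt d x"
proof -
  have "d \<noteq> x"
  proof
    assume "d = x"
    then have "(src d, src d) \<in> {(src e, tgt e) | e. e \<in> E}\<^sup>+"
      using assms(2,4) by force
    then show False
      using assms(1) by (simp add: progressive_graph_def)
  qed
  then show ?thesis
    using assms(2-4) by (auto simp: edge_path_def)
qed

lemma edge_path_vertex_reach:
  assumes "edge_path E src tgt d x"
  shows "(tgt d, src x) \<in> {(src e, tgt e) | e. e \<in> E}\<^sup>*"
proof -
  have "(d, x) \<in> {(a, b). a \<in> E \<and> b \<in> E \<and> tgt a = src b}\<^sup>+"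
    using assms by (simp add: edge_path_def)
  then show ?thesis
  proof (induction rule: trancl_induct)
    case (base y)
    then show ?case
      by simp
  next
    case (step y z)
    from step.hyps(2) have "y \<in> E" "tgt y = src z"
      by simp_all
    then have "(src y, src z) \<in> {(src e, tgt e) | e. e \<in> E}"
      by (intro CollectI exI[of _ y]) simp
    with step.IH show ?case
      by (rule rtrancl_into_rtrancl)
  qed
qed

lemma edge_path_in_edges_nonempty:
  assumes "edge_path E src tgt d x"
  shows "in_edges E tgt (src x) \<noteq> {}"
proof -
  have "(d, x) \<in> {(a, b). a \<in> E \<and> b \<in> E \<and> tgt a = src b}\<^sup>+"
    using assms by (simp add: edge_path_def)
  then show ?thesis
    by (cases rule: tranclE) (auto simp: in_edges_def)
qed

lemma progressive_graph_reach_antisym: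
  assumes "progressive_graph V E src tgt"
    and "(v, w) \<in> {(src e, tgt e) | e. e \<in> E}\<^sup>*" "(w, v) \<in> {(src e, tgt e) | e. e \<in> E}\<^sup>*"
  shows "v = w"
proof (rule ccontr)
  assume "v \<noteq> w"
  with assms(2,3) have "(v, v) \<in> {(src e, tgt e) | e. e \<in> E}\<^sup>+"
    by (meson rtranclD trancl_rtrancl_trancl)
  with assms(1) show False
    by (simp add: progressive_graph_def)
qed

lemma input_edge_if_in_edges_empty:
  assumes "progressive_graph V E src tgt" "e \<in> E" "in_edges E tgt (src e) = {}"
  shows "e \<in> input_edges V E src tgt"
  using assms by (simp add: progressive_graph_def input_edges_def boundary_def)

lemma planar_orderD:
  assumes "planar_order V E src tgt P"
  shows "slin_on E P"
    and "edge_path E src tgt a b \<Longrightarrow> (a, b) \<in> P"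
    and "(a, b) \<in> P \<Longrightarrow> (b, c) \<in> P \<Longrightarrow> edge_path E src tgt a c \<Longrightarrow>
           edge_path E src tgt a b \<or> edge_path E src tgt b c"
  using assms unfolding planar_order_def by blast+

lemma planar_order_in_edge_reaches:
  assumes G: "progressive_graph V E src tgt"
    and P: "planar_order V E src tgt P" and Q: "planar_order V E src tgt Q"
    and "m \<in> E" "(m, m') \<in> P" "(m', m) \<in> Q"
    and below: "{y. (y, m) \<in> P} \<subseteq> {y. (y, m') \<in> Q}"
    and d: "d \<in> in_edges E tgt (src m)"
  shows "edge_path E src tgt d m'"
proof -
  have "d \<in> E" "tgt d = src m"
    using d by (simp_all add: in_edges_def)
  then have d_m: "edge_path E src tgt d m"
    using edge_path_if_consecutive[OF G _ \<open>m \<in> E\<close>] by blast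
  then have "(d, m) \<in> P"
    by (rule planar_orderD(2)[OF P])
  with below have "(d, m') \<in> Q"
    by blast
  then have "edge_path E src tgt d m' \<or> edge_path E src tgt m' m"
    using \<open>(m', m) \<in> Q\<close> d_m by (rule planar_orderD(3)[OF Q])
  moreover have "\<not> edge_path E src tgt m' m"
    using planar_orderD(2)[OF P] slin_on_asym[OF planar_orderD(1)[OF P] \<open>(m, m') \<in> P\<close>]
    by blast
  ultimately show ?thesis
    by blast
qed

lemma same_src_or_input_edges_if_in_edges_reach:
  assumes G: "progressive_graph V E src tgt" and "m \<in> E" "m' \<in> E"
    and to_m': "\<And>d. d \<in> in_edges E tgt (src m) \<Longrightarrow> edge_path E src tgt d m'"
    and to_m: "\<And>d. d \<in> in_edges E tgt (src m') \<Longrightarrow> edge_path E src tgt d m"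
  shows "src m = src m' \<or> m \<in> input_edges V E src tgt \<and> m' \<in> input_edges V E src tgt"
proof (cases "in_edges E tgt (src m) = {}")
  case True
  then have "in_edges E tgt (src m') = {}"
    using edge_path_in_edges_nonempty[OF to_m] by auto
  with True show ?thesis
    using input_edge_if_in_edges_empty[OF G] \<open>m \<in> E\<close> \<open>m' \<in> E\<close> by simp
next
  case False
  then obtain d where d: "d \<in> in_edges E tgt (src m)"
    by auto
  then have "in_edges E tgt (src m') \<noteq> {}"
    by (rule edge_path_in_edges_nonempty[OF to_m'])
  then obtain d' where d': "d' \<in> in_edges E tgt (src m')"
    by auto
  have "(src m, src m') \<in> {(src e, tgt e) | e. e \<in> E}\<^sup>*"
    using edge_path_vertex_reach[OF to_m'[OF d]] d by (simp add: in_edges_def)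
  moreover have "(src m', src m) \<in> {(src e, tgt e) | e. e \<in> E}\<^sup>*"
    using edge_path_vertex_reach[OF to_m[OF d']] d' by (simp add: in_edges_def)
  ultimately have "src m = src m'"
    by (rule progressive_graph_reach_antisym[OF G])
  then show ?thesis ..
qed

lemma compatible_orders_agree_if_same_src_or_input_edges:
  assumes "progressive_graph V E src tgt"
    and "compatible_order V E src tgt inord outord ginord goutord P"
    and "compatible_order V E src tgt inord outord ginord goutord Q"
    and "m \<in> E" "m' \<in> E" "(m, m') \<in> P"
    and "src m = src m' \<or> m \<in> input_edges V E src tgt \<and> m' \<in> input_edges V E src tgt"
  shows "(m, m') \<in> Q"
  using assms(7)
proof
  assume "src m = src m'"
  moreover have "src m \<in> V"
    using assms(1,4) by (simp add: progressive_graph_def)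
  ultimately have "\<exists>v\<in>V. m \<in> out_edges E src v \<and> m' \<in> out_edges E src v"
    using assms(4,5) by (auto simp: out_edges_def)
  then show ?thesis
    using assms(2,3,6) unfolding compatible_order_def by blast
next
  assume "m \<in> input_edges V E src tgt \<and> m' \<in> input_edges V E src tgt"
  then show ?thesis
    using assms(2,3,6) unfolding compatible_order_def by blast
qed

theorem proposition2p14:
  fixes V :: "'v set" and E :: "'e set" and src tgt :: "'e \<Rightarrow> 'v"
    and inord outord :: "'v \<Rightarrow> 'e rel" and ginord goutord :: "'e rel"
    and P1 P2 :: "'e rel"
  assumes "progressive_graph V E src tgt"
    and "polarized V E src tgt inord outord"
    and "anchored V E src tgt ginord goutord"
    and "compatible_order V E src tgt inord outord ginord goutord P1"
    and "compatible_order V E src tgt inord outord ginord goutord P2"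
  shows "P1 = P2"
proof (rule ccontr)
  assume "P1 \<noteq> P2"
  note G = assms(1) and C1 = assms(4) and C2 = assms(5)
  have P1: "planar_order V E src tgt P1" and P2: "planar_order V E src tgt P2"
    using C1 C2 by (simp_all add: compatible_order_def)
  have "finite E"
    using G by (simp add: progressive_graph_def)
  then obtain m m' where m: "m \<in> E" "m' \<in> E" "(m, m') \<in> P1" "(m', m) \<in> P2"
    and same_below: "{y. (y, m) \<in> P1} = {y. (y, m') \<in> P2}"
    using planar_orderD(1)[OF P1] planar_orderD(1)[OF P2] \<open>P1 \<noteq> P2\<close>
    by (rule slin_on_first_difference)
  have "edge_path E src tgt d m'" if "d \<in> in_edges E tgt (src m)" for d
    using planar_order_in_edge_reaches[OF G P1 P2 m(1,3,4) _ that] same_below by simp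
  moreover have "edge_path E src tgt d m" if "d \<in> in_edges E tgt (src m')" for d
    using planar_order_in_edge_reaches[OF G P2 P1 m(2,4,3) _ that] same_below by simp
  ultimately have "src m = src m' \<or> m \<in> input_edges V E src tgt \<and> m' \<in> input_edges V E src tgt"
    using same_src_or_input_edges_if_in_edges_reach[OF G m(1,2)] by blast
  then have "(m, m') \<in> P2"
    by (rule compatible_orders_agree_if_same_src_or_input_edges[OF G C1 C2 m(1-3)])
  then show False
    using slin_on_asym[OF planar_orderD(1)[OF P2] m(4)] by contradiction
qed

end
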